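(* Let $\mathcal{S}=\{1,\dots,S\}$, $T>0$, and let $R_t$ be the rate matrix of a forward CTMC with $X_0\sim p_{\text{data}}$, conditionals $q_{t|0}(\cdot\mid x_0)$ and marginals $q_t$; let $\hat\lambda_t,\hat r_t$ be the true reverse exit rates and jump distributions and $\lambda^\theta_t,r^\theta_t$ the model exit rates and jump distributions. For $x_0\in\mathcal{S}$ define \[ \hat\lambda_{t|0}(i\mid x_0):=\sum_{j\neq i}R_t(j,i)\frac{q_{t|0}(j\mid x_0)}{q_{t|0}(i\mid x_0)},\qquad \hat r_{t|0}(j\mid i,x_0):=\frac{R_t(j,i)\frac{q_{t|0}(j\mid x_0)}{q_{t|0}(i\mid x_0)}}{\hat\lambda_{t|0}(i\mid x_0)}. \] Let $\mathcal{L}(\theta):=\mathbb{E}_{t\sim\mathcal{U}(0,T),\,x_t\sim q_t}\bigl[\mathrm{KL}^{\text{Poi}}(\hat\lambda_t(x_t)\|\lambda^\theta_t(x_t))+\hat\lambda_t(x_t)\,\mathrm{CE}(\hat r_t(\cdot\mid x_t),r^\theta_t(\cdot\mid x_t))\bigr]$. Then \[ \mathcal{L}(\theta)=\mathbb{E}_{t\sim\mathcal{U}(0,T),\,x_0\sim p_{\text{data}},\,x_t\sim q_{t|0}(\cdot\mid x_0)}\Bigl[-\sum_{j\neq x_t}R_t(j,x_t)\frac{q_{t|0}(j\mid x_0)}{q_{t|0}(x_t\mid x_0)}\log\bigl(\lambda^\theta_t(x_t)r^\theta_t(j\mid x_t)\bigr)-\hat\lambda_{t|0}(x_t\mid x_0)+\lambda^\theta_t(x_t)\Bigr]+\mathrm{const},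 \] where the constant does not depend on $\theta$.
   Context: A rate matrix $R_t$ satisfies $R_t(i,j)\ge0$ ($i\ne j$), $\sum_jR_t(i,j)=0$. $q_{t|0}(i\mid x_0)=\mathbb{P}(X_t=i\mid X_0=x_0)$, $q_t(i)=\sum_{x_0}p_{\text{data}}(x_0)q_{t|0}(i\mid x_0)$. True reverse rates $\hat R_t(i,j)=R_t(j,i)q_t(j)/q_t(i)$, $\hat\lambda_t(i)=\sum_{j\ne i}\hat R_t(i,j)$, $\hat r_t(j\mid i)=\hat R_t(i,j)/\hat\lambda_t(i)$. Model: $\lambda^\theta_t(i)>0$, $r^\theta_t(\cdot\mid i)$ a probability distribution on $\mathcal{S}\setminus\{i\}$. $\mathrm{KL}^{\text{Poi}}(\lambda\|\lambda')=\lambda\log\frac{\lambda}{\lambda'}-\lambda+\lambda'$, $\mathrm{CE}(\hat r,r)=-\sum_{j\ne i}\hat r(j\mid i)\log r(j\mid i)$. All ratios and logarithms are assumed well defined (e.g. conditional probabilities positive). *)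

theory Defs
  imports "HOL-Analysis.Analysis"
begin

text \<open>State space: a finite type 's (standing for {1,...,S}).
  Time-dependent quantities are functions of t :: real.
  R t i j = R_t(i,j); qc t x0 i = q_{t|0}(i | x0); p = p_data.\<close>

definition rate_matrix :: "('s::finite \<Rightarrow> 's \<Rightarrow> real) \<Rightarrow> bool" where
  "rate_matrix R \<longleftrightarrow> (\<forall>i j. i \<noteq> j \<longrightarrow> R i j \<ge> 0) \<and> (\<forall>i. (\<Sum>j\<in>UNIV. R i j) = 0)"

definition qmarg :: "('s::finite \<Rightarrow> real) \<Rightarrow> ('s \<Rightarrow> 's \<Rightarrow> real) \<Rightarrow> 's \<Rightarrow> real" where
  "qmarg p qc0 i = (\<Sum>x0\<in>UNIV. p x0 * qc0 x0 i)"

definition rev_rate :: "('s \<Rightarrow> 's \<Rightarrow> real) \<Rightarrow> ('s \<Rightarrow> real) \<Rightarrow> 's \<Rightarrow> 's \<Rightarrow> real" where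
  "rev_rate R q i j = R j i * q j / q i"

definition rev_exit :: "('s::finite \<Rightarrow> 's \<Rightarrow> real) \<Rightarrow> ('s \<Rightarrow> real) \<Rightarrow> 's \<Rightarrow> real" where
  "rev_exit R q i = (\<Sum>j\<in>UNIV - {i}. rev_rate R q i j)"

definition rev_jump :: "('s::finite \<Rightarrow> 's \<Rightarrow> real) \<Rightarrow> ('s \<Rightarrow> real) \<Rightarrow> 's \<Rightarrow> 's \<Rightarrow> real" where
  "rev_jump R q i j = rev_rate R q i j / rev_exit R q i"

definition cond_exit :: "('s::finite \<Rightarrow> 's \<Rightarrow> real) \<Rightarrow> ('s \<Rightarrow> real) \<Rightarrow> 's \<Rightarrow> real" where
  "cond_exit R qc i = (\<Sum>j\<in>UNIV - {i}. R j i * qc j / qc i)"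

definition KL_poi :: "real \<Rightarrow> real \<Rightarrow> real" where
  "KL_poi l l' = l * ln (l / l') - l + l'"

definition CE :: "'s::finite \<Rightarrow> ('s \<Rightarrow> real) \<Rightarrow> ('s \<Rightarrow> real) \<Rightarrow> real" where
  "CE i rh r = - (\<Sum>j\<in>UNIV - {i}. rh j * ln (r j))"

text \<open>Loss integrand (expectation over x_t ~ q_t at fixed t).
  lam t i = lambda^theta_t(i), rth t i j = r^theta_t(j | i).\<close>
definition loss_integrand ::
  "(real \<Rightarrow> 's::finite \<Rightarrow> 's \<Rightarrow> real) \<Rightarrow> ('s \<Rightarrow> real) \<Rightarrow> (real \<Rightarrow> 's \<Rightarrow> 's \<Rightarrow> real)
   \<Rightarrow> (real \<Rightarrow> 's \<Rightarrow> real) \<Rightarrow> (real \<Rightarrow> 's \<Rightarrow> 's \<Rightarrow> real) \<Rightarrow> real \<Rightarrow> real" where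
  "loss_integrand R p qc lam rth t =
     (let q = qmarg p (qc t) in
      (\<Sum>i\<in>UNIV. q i *
         (KL_poi (rev_exit (R t) q i) (lam t i)
          + rev_exit (R t) q i * CE i (rev_jump (R t) q i) (rth t i))))"

definition denoise_integrand ::
  "(real \<Rightarrow> 's::finite \<Rightarrow> 's \<Rightarrow> real) \<Rightarrow> ('s \<Rightarrow> real) \<Rightarrow> (real \<Rightarrow> 's \<Rightarrow> 's \<Rightarrow> real)
   \<Rightarrow> (real \<Rightarrow> 's \<Rightarrow> real) \<Rightarrow> (real \<Rightarrow> 's \<Rightarrow> 's \<Rightarrow> real) \<Rightarrow> real \<Rightarrow> real" where
  "denoise_integrand R p qc lam rth t =
     (\<Sum>x0\<in>UNIV. p x0 * (\<Sum>i\<in>UNIV. qc t x0 i *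
        ( - (\<Sum>j\<in>UNIV - {i}. R t j i * (qc t x0 j / qc t x0 i) * ln (lam t i * rth t i j))
          - cond_exit (R t) (qc t x0) i + lam t i)))"

definition unif_exp :: "real \<Rightarrow> (real \<Rightarrow> real) \<Rightarrow> real" where
  "unif_exp T f = (\<integral>t\<in>{0<..<T}. f t \<partial>lborel) / T"

end

theory Submission
  imports Defs
begin

text \<open>Fix a time t and write q for the marginal and e(i) for the true reverse exit rate.
  The flux q(i) e(i) = (\<Sum>j\<noteq>i. R(j,i) q(j)) and the product q(i) e(i) CE(\<dots>) =
  -(\<Sum>j\<noteq>i. R(j,i) q(j) ln r(j|i)) are linear in q, so expanding the Poisson KL divergence
  writes the loss integrand as (\<Sum>i. q(i) e(i) ln e(i)) plus a model term linear in q.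
  As q is the p-mixture of the conditionals q(\<cdot>|x0), the model term is the p-mixture of the
  conditional model terms, and these are exactly the summands of the denoising integrand.
  The remainder (\<Sum>i. q(i) e(i) ln e(i)) does not involve the model; its time average is the
  constant.\<close>

text \<open>The summand 1 accounts for the term -q(i) e(i) of the loss, written through the flux
  so that the expression is linear in q.\<close>

definition model_term ::
  "('s::finite \<Rightarrow> 's \<Rightarrow> real) \<Rightarrow> ('s \<Rightarrow> real) \<Rightarrow> real \<Rightarrow> ('s \<Rightarrow> real) \<Rightarrow> 's \<Rightarrow> real" where
  "model_term R q lam r i = q i * lam - (\<Sum>j\<in>UNIV - {i}. R j i * q j * (ln (lam * r j) + 1))"

definition rev_exit_entropy :: "('s::finite \<Rightarrow> 's \<Rightarrow> real) \<Rightarrow> ('s \<Rightarrow> real) \<Rightarrow> real" where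
  "rev_exit_entropy R q = (\<Sum>i\<in>UNIV. q i * rev_exit R q i * ln (rev_exit R q i))"

lemma cond_exit_eq_rev_exit: "cond_exit R qc = rev_exit R qc"
  by (simp add: fun_eq_iff cond_exit_def rev_exit_def rev_rate_def)

lemma mult_rev_exit_eq_flux:
  assumes "q i \<noteq> 0"
  shows "q i * rev_exit R q i = (\<Sum>j\<in>UNIV - {i}. R j i * q j)"
  unfolding rev_exit_def rev_rate_def sum_distrib_left using assms by (intro sum.cong) auto

lemma mult_rev_exit_mult_CE:
  assumes "q i \<noteq> 0" "rev_exit R q i \<noteq> 0"
  shows "q i * (rev_exit R q i * CE i (rev_jump R q i) r)
    = - (\<Sum>j\<in>UNIV - {i}. R j i * q j * ln (r j))"
  unfolding CE_def rev_jump_def rev_rate_def sum_distrib_left sum_negf[symmetric]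
  using assms by (intro sum.cong) (auto simp: field_simps)

lemma KL_poi_expand:
  assumes "l > 0" "l' > 0"
  shows "KL_poi l l' = l * ln l - l * ln l' - l + l'"
  unfolding KL_poi_def using assms by (simp add: ln_div algebra_simps)

lemma sum_linear_qmarg:
  "(\<Sum>j\<in>A. c j * qmarg p qc j) = (\<Sum>x0\<in>UNIV. p x0 * (\<Sum>j\<in>A. c j * qc x0 j))"
  unfolding qmarg_def sum_distrib_left
  by (subst sum.swap) (simp add: algebra_simps)

lemma sum_weighted_pos:
  fixes p f :: "'a::finite \<Rightarrow> real"
  assumes "\<And>x. p x \<ge> 0" "(\<Sum>x\<in>UNIV. p x) = 1" "\<And>x. f x > 0"
  shows "(\<Sum>x\<in>UNIV. p x * f x) > 0"
proof -
  obtain x where "p x \<noteq> 0"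
    using assms(2) by force
  then have "p x > 0"
    using assms(1)[of x] by linarith
  moreover have "p y * f y \<ge> 0" for y
    using assms(1)[of y] assms(3)[of y] by simp
  ultimately show ?thesis
    using assms(3)[of x] by (intro sum_pos2[of UNIV x]) simp_all
qed

lemma qmarg_pos:
  assumes "\<And>x. p x \<ge> 0" "(\<Sum>x\<in>UNIV. p x) = 1" "\<And>x0. qc x0 i > 0"
  shows "qmarg p qc i > 0"
  unfolding qmarg_def using assms by (rule sum_weighted_pos)

lemma qmarg_mult_rev_exit:
  assumes "qmarg p qc i \<noteq> 0" "\<And>x0. qc x0 i \<noteq> 0"
  shows "qmarg p qc i * rev_exit R (qmarg p qc) i
    = (\<Sum>x0\<in>UNIV. p x0 * (qc x0 i * rev_exit R (qc x0) i))"
  using assms by (simp add: mult_rev_exit_eq_flux sum_linear_qmarg)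

lemma rev_exit_qmarg_pos:
  assumes "\<And>x. p x \<ge> 0" "(\<Sum>x\<in>UNIV. p x) = 1"
    and "\<And>x0. qc x0 i > 0" "\<And>x0. rev_exit R (qc x0) i > 0"
  shows "rev_exit R (qmarg p qc) i > 0"
proof -
  have q_pos: "qmarg p qc i > 0"
    using assms(1-3) by (rule qmarg_pos)
  have "qmarg p qc i * rev_exit R (qmarg p qc) i > 0"
    using assms q_pos by (simp add: qmarg_mult_rev_exit sum_weighted_pos less_imp_neq[symmetric])
  then show ?thesis
    using q_pos by (simp add: zero_less_mult_iff)
qed

lemma model_term_qmarg:
  "model_term R (qmarg p qc) lam r i = (\<Sum>x0\<in>UNIV. p x0 * model_term R (qc x0) lam r i)"
proof -
  have "qmarg p qc i * lam = (\<Sum>x0\<in>UNIV. p x0 * (qc x0 i * lam))"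
    by (simp add: qmarg_def sum_distrib_right mult.assoc)
  moreover have "(\<Sum>j\<in>UNIV - {i}. R j i * qmarg p qc j * (ln (lam * r j) + 1))
      = (\<Sum>x0\<in>UNIV. p x0 * (\<Sum>j\<in>UNIV - {i}. R j i * qc x0 j * (ln (lam * r j) + 1)))"
    using sum_linear_qmarg[where c="\<lambda>j. R j i * (ln (lam * r j) + 1)" and A="UNIV - {i}"]
    by (simp add: algebra_simps)
  ultimately show ?thesis
    unfolding model_term_def by (simp add: right_diff_distrib sum_subtractf)
qed

lemma loss_term_eq_model_term:
  assumes q_pos: "q i > 0" and e_pos: "rev_exit R q i > 0"
    and lam_pos: "lam > 0" and r_pos: "\<And>j. j \<noteq> i \<Longrightarrow> r j > 0"
  shows "q i * (KL_poi (rev_exit R q i) lam + rev_exit R q i * CE i (rev_jump R q i) r)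
    = q i * rev_exit R q i * ln (rev_exit R q i) + model_term R q lam r i"
proof -
  let ?e = "rev_exit R q i"
  have flux: "q i * ?e = (\<Sum>j\<in>UNIV - {i}. R j i * q j)"
    using q_pos by (simp add: mult_rev_exit_eq_flux)
  have "(\<Sum>j\<in>UNIV - {i}. R j i * q j * (ln (lam * r j) + 1))
      = q i * ?e * ln lam + (\<Sum>j\<in>UNIV - {i}. R j i * q j * ln (r j)) + q i * ?e"
    unfolding flux sum_distrib_right sum.distrib[symmetric]
  proof (intro sum.cong refl)
    fix j assume "j \<in> UNIV - {i}"
    then have "ln (lam * r j) = ln lam + ln (r j)"
      using ln_mult_pos[OF lam_pos r_pos] by simp
    then show "R j i * q j * (ln (lam * r j) + 1)
        = R j i * q j * ln lam + R j i * q j * ln (r j) + R j i * q j"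
      by (simp add: algebra_simps)
  qed
  moreover have "q i * (?e * CE i (rev_jump R q i) r)
      = - (\<Sum>j\<in>UNIV - {i}. R j i * q j * ln (r j))"
    using q_pos e_pos by (simp add: mult_rev_exit_mult_CE)
  ultimately show ?thesis
    unfolding model_term_def KL_poi_expand[OF e_pos lam_pos] by (simp add: algebra_simps)
qed

lemma denoise_term_eq_model_term:
  assumes "qc i \<noteq> 0"
  shows "qc i * (- (\<Sum>j\<in>UNIV - {i}. R j i * (qc j / qc i) * ln (lam * r j))
      - cond_exit R qc i + lam) = model_term R qc lam r i"
  using mult_rev_exit_eq_flux[of qc i R] assms
  by (simp add: model_term_def cond_exit_eq_rev_exit sum_distrib_left sum.distrib
      algebra_simps sum_subtractf)

lemma denoise_integrand_eq_model_terms: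
  assumes "\<And>x0 i. qc t x0 i \<noteq> 0"
  shows "denoise_integrand R p qc lam rth t
    = (\<Sum>i\<in>UNIV. model_term (R t) (qmarg p (qc t)) (lam t i) (rth t i) i)"
proof -
  have summand: "qc t x0 i *
        (- (\<Sum>j\<in>UNIV - {i}. R t j i * (qc t x0 j / qc t x0 i) * ln (lam t i * rth t i j))
         - cond_exit (R t) (qc t x0) i + lam t i)
      = model_term (R t) (qc t x0) (lam t i) (rth t i) i"
    for x0 i using assms by (rule denoise_term_eq_model_term)
  have "denoise_integrand R p qc lam rth t
      = (\<Sum>x0\<in>UNIV. p x0 * (\<Sum>i\<in>UNIV. model_term (R t) (qc t x0) (lam t i) (rth t i) i))"
    unfolding denoise_integrand_def summand ..
  also have "\<dots> = (\<Sum>i\<in>UNIV. \<Sum>x0\<in>UNIV. p x0 * model_term (R t) (qc t x0) (lam t i) (rth t i) i)"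
    unfolding sum_distrib_left by (rule sum.swap)
  finally show ?thesis
    by (simp add: model_term_qmarg)
qed

lemma loss_integrand_eq_model_terms:
  assumes "\<And>x. p x \<ge> 0" "(\<Sum>x\<in>UNIV. p x) = 1"
    and "\<And>x0 i. qc t x0 i > 0" "\<And>x0 i. rev_exit (R t) (qc t x0) i > 0"
    and "\<And>i. lam t i > 0" "\<And>i j. j \<noteq> i \<Longrightarrow> rth t i j > 0"
  shows "loss_integrand R p qc lam rth t
    = rev_exit_entropy (R t) (qmarg p (qc t))
      + (\<Sum>i\<in>UNIV. model_term (R t) (qmarg p (qc t)) (lam t i) (rth t i) i)"
proof -
  have "qmarg p (qc t) i > 0" "rev_exit (R t) (qmarg p (qc t)) i > 0" for i
    using assms(1-4) by (simp_all add: qmarg_pos rev_exit_qmarg_pos)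
  then show ?thesis
    unfolding loss_integrand_def rev_exit_entropy_def Let_def sum.distrib[symmetric]
    using assms(5,6) by (intro sum.cong) (simp_all add: loss_term_eq_model_term)
qed

lemma unif_exp_eq_add:
  assumes "set_integrable lborel {0<..<T} f" "set_integrable lborel {0<..<T} g"
    and "\<And>t. t \<in> {0<..<T} \<Longrightarrow> f t = g t + h t"
  shows "unif_exp T f = unif_exp T g + unif_exp T h"
proof -
  have "(LINT t:{0<..<T}|lborel. f t)
      = (LINT t:{0<..<T}|lborel. g t) + (LINT t:{0<..<T}|lborel. f t - g t)"
    using set_integral_diff(2)[OF assms(1,2)] by simp
  also have "(LINT t:{0<..<T}|lborel. f t - g t) = (LINT t:{0<..<T}|lborel. h t)"
    using assms(3) by (intro set_lebesgue_integral_cong) auto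
  finally show ?thesis
    unfolding unif_exp_def by (simp add: add_divide_distrib)
qed

theorem proposition4p6:
  fixes T :: real
    and R :: "real \<Rightarrow> 's::finite \<Rightarrow> 's \<Rightarrow> real"
    and p :: "'s \<Rightarrow> real"
    and qc :: "real \<Rightarrow> 's \<Rightarrow> 's \<Rightarrow> real"
  assumes T_pos: "T > 0"
    and rate: "\<And>t. rate_matrix (R t)"
    and p_nonneg: "\<And>x. p x \<ge> 0"
    and p_sum: "(\<Sum>x\<in>UNIV. p x) = 1"
    and q_init: "\<And>x0 i. qc 0 x0 i = (if i = x0 then 1 else 0)"
    and q_kolmogorov: "\<And>x0 i t. t \<in> {0..T} \<Longrightarrow>
          ((\<lambda>s. qc s x0 i) has_real_derivative (\<Sum>k\<in>UNIV. qc t x0 k * R t k i)) (at t within {0..T})"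
    and q_pos: "\<And>t x0 i. t \<in> {0<..<T} \<Longrightarrow> qc t x0 i > 0"
    and cond_exit_pos: "\<And>t x0 i. t \<in> {0<..<T} \<Longrightarrow> cond_exit (R t) (qc t x0) i > 0"
  shows "\<exists>C::real. \<forall>(lam :: real \<Rightarrow> 's \<Rightarrow> real) (rth :: real \<Rightarrow> 's \<Rightarrow> 's \<Rightarrow> real).
           (\<forall>t\<in>{0<..<T}. \<forall>i. lam t i > 0
               \<and> (\<forall>j. j \<noteq> i \<longrightarrow> rth t i j > 0) \<and> (\<Sum>j\<in>UNIV - {i}. rth t i j) = 1)
         \<and> set_integrable lborel {0<..<T} (loss_integrand R p qc lam rth)
         \<and> set_integrable lborel {0<..<T} (denoise_integrand R p qc lam rth)
         \<longrightarrow> unif_exp T (loss_integrand R p qc lam rth)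
             = unif_exp T (denoise_integrand R p qc lam rth) + C"
proof (intro exI[of _ "unif_exp T (\<lambda>t. rev_exit_entropy (R t) (qmarg p (qc t)))"] allI impI,
       elim conjE)
  fix lam :: "real \<Rightarrow> 's \<Rightarrow> real" and rth :: "real \<Rightarrow> 's \<Rightarrow> 's \<Rightarrow> real"
  assume model: "\<forall>t\<in>{0<..<T}. \<forall>i. lam t i > 0
      \<and> (\<forall>j. j \<noteq> i \<longrightarrow> rth t i j > 0) \<and> (\<Sum>j\<in>UNIV - {i}. rth t i j) = 1"
    and integrable: "set_integrable lborel {0<..<T} (loss_integrand R p qc lam rth)"
      "set_integrable lborel {0<..<T} (denoise_integrand R p qc lam rth)"
  have "loss_integrand R p qc lam rth t
      = denoise_integrand R p qc lam rth t + rev_exit_entropy (R t) (qmarg p (qc t))"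
    if t: "t \<in> {0<..<T}" for t
  proof -
    have "\<And>x0 i. rev_exit (R t) (qc t x0) i > 0"
      using cond_exit_pos[OF t] by (simp add: cond_exit_eq_rev_exit)
    then show ?thesis
      using model t p_nonneg p_sum q_pos[OF t]
      by (simp add: loss_integrand_eq_model_terms denoise_integrand_eq_model_terms
          less_imp_neq[symmetric])
  qed
  with integrable show "unif_exp T (loss_integrand R p qc lam rth)
      = unif_exp T (denoise_integrand R p qc lam rth)
        + unif_exp T (\<lambda>t. rev_exit_entropy (R t) (qmarg p (qc t)))"
    by (rule unif_exp_eq_add)
qed

end
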